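(* Let $\theta_1<\theta_2$, $f\in C^2([\theta_1,\theta_2])$, $\gamma>1$, and let $I\subseteq[\theta_1,\theta_2]$ be a closed interval. Suppose that, for positive constants $A$ and $\alpha$ with $\alpha<2\gamma-2$, one of the following holds: $f(s)f''(s)\ge A(s-\theta_1)^\alpha$ for all $s\in I$; or $f(s)f''(s)\ge A(\theta_2-s)^\alpha$ for all $s\in I$. Then there is a constant $C>0$ depending only on $A,\alpha,\theta_1,\theta_2,\gamma$ such that $\int_I|f(s)|^{-1/\gamma}\,ds\le C$. *)

theory Defs
  imports "HOL-Analysis.Analysis"
begin

definition C2_on_with :: "real \<Rightarrow> real \<Rightarrow> (real \<Rightarrow> real) \<Rightarrow> (real \<Rightarrow> real) \<Rightarrow> (real \<Rightarrow> real) \<Rightarrow> bool" where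
  "C2_on_with t1 t2 f f1 f2 \<longleftrightarrow>
     (\<forall>s\<in>{t1..t2}. (f has_real_derivative f1 s) (at s within {t1..t2})) \<and>
     (\<forall>s\<in>{t1..t2}. (f1 has_real_derivative f2 s) (at s within {t1..t2})) \<and>
     continuous_on {t1..t2} f2"

definition neg_pow_integrand :: "real \<Rightarrow> (real \<Rightarrow> real) \<Rightarrow> real \<Rightarrow> ennreal" where
  "neg_pow_integrand \<gamma> f s = (if f s = 0 then \<infinity> else ennreal (\<bar>f s\<bar> powr (- 1 / \<gamma>)))"

end

theory Submission
  imports Defs
begin

text \<open>The function \<open>g = f\<^sup>2\<close> satisfies \<open>g'' = 2 (f'\<^sup>2 + f f'') \<ge> 2 f f''\<close>, so it is convex and
  \<open>g'' \<ge> 2 A w\<^sup>\<alpha>\<close>, where \<open>w\<close> is the distance to the relevant endpoint. If \<open>s\<^sub>0\<close> minimises \<open>g\<close>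
  on \<open>[a, b]\<close>, convexity gives \<open>g s \<ge> g s\<^sub>0 + m (s - s\<^sub>0)\<^sup>2 / 16\<close> for any lower bound \<open>m\<close> of \<open>g''\<close>
  between \<open>s\<close> and the midpoint of \<open>s\<^sub>0\<close> and \<open>s\<close>, and there \<open>w \<ge> w s / 2\<close>. Hence
  \<open>f(s)\<^sup>2 \<ge> K (s - s\<^sub>0)\<^sup>2 w(s)\<^sup>\<alpha>\<close>, and then
  \<open>|f s| powr (-1/\<gamma>) \<le> K powr (-1/(2\<gamma>)) (|s - s\<^sub>0| powr -r + w(s) powr -r)\<close> with
  \<open>r = (2 + \<alpha>) / (2\<gamma>) < 1\<close>, which is integrable with a bound independent of \<open>f\<close>, \<open>a\<close> and \<open>b\<close>.\<close>

lemma DERIV_ge_imp_diff_ge: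
  fixes g g' :: "real \<Rightarrow> real"
  assumes deriv: "\<forall>t\<in>S. (g has_real_derivative g' t) (at t within S)"
    and "{x..y} \<subseteq> S" and "x \<le> y" and ge: "\<forall>t\<in>{x..y}. m \<le> g' t"
  shows "m * (y - x) \<le> g y - g x"
proof (cases "x = y")
  case False
  then have "x < y" using \<open>x \<le> y\<close> by simp
  have "\<exists>z\<in>{x<..<y}. g y - g x = g' z * (y - x)"
  proof (rule mvt_simple[OF \<open>x < y\<close>])
    fix t assume "x \<le> t" "t \<le> y"
    with deriv \<open>{x..y} \<subseteq> S\<close> have "(g has_real_derivative g' t) (at t within {x..y})"
      by (meson DERIV_subset atLeastAtMost_iff subsetD)
    then show "(g has_derivative (*) (g' t)) (at t within {x..y})"
      by (simp add: has_field_derivative_def)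
  qed
  then obtain z where "z \<in> {x<..<y}" "g y - g x = g' z * (y - x)" by auto
  with ge \<open>x < y\<close> show ?thesis by (simp add: mult_right_mono)
qed simp

lemma DERIV_le_imp_diff_le:
  fixes g g' :: "real \<Rightarrow> real"
  assumes deriv: "\<forall>t\<in>S. (g has_real_derivative g' t) (at t within S)"
    and "{x..y} \<subseteq> S" and "x \<le> y" and "\<forall>t\<in>{x..y}. g' t \<le> M"
  shows "g y - g x \<le> M * (y - x)"
proof -
  have "\<forall>t\<in>S. ((\<lambda>t. - g t) has_real_derivative - g' t) (at t within S)"
    using deriv by (auto intro: derivative_intros)
  from DERIV_ge_imp_diff_ge[OF this, of x y "- M"] assms(2-4) show ?thesis by auto
qed

text \<open>With \<open>q\<close> the midpoint and \<open>r\<close> the three-quarter point of \<open>[s\<^sub>0, s]\<close>: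
  minimality at \<open>s\<^sub>0\<close> forces \<open>g' q \<ge> 0\<close>, so \<open>g' \<ge> m (r - q)\<close> on \<open>[r, s]\<close>.\<close>
lemma convex_min_growth_right:
  fixes g g' g'' :: "real \<Rightarrow> real"
  assumes "s\<^sub>0 < s" and "{s\<^sub>0..s} \<subseteq> S"
    and g: "\<forall>t\<in>S. (g has_real_derivative g' t) (at t within S)"
    and g': "\<forall>t\<in>S. (g' has_real_derivative g'' t) (at t within S)"
    and g''_nonneg: "\<forall>t\<in>{s\<^sub>0..s}. 0 \<le> g'' t"
    and min: "\<forall>t\<in>{s\<^sub>0..s}. g s\<^sub>0 \<le> g t"
    and g''_ge: "\<forall>t\<in>{(s\<^sub>0 + s) / 2..s}. m \<le> g'' t"
  shows "g s\<^sub>0 + m * (s - s\<^sub>0)\<^sup>2 / 16 \<le> g s"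
proof -
  define q where "q = (s\<^sub>0 + s) / 2"
  define r where "r = (q + s) / 2"
  have order: "s\<^sub>0 < q" "q < r" "r < s" using \<open>s\<^sub>0 < s\<close> by (auto simp: q_def r_def)
  have g'_mono: "g' t \<le> g' t'" if "s\<^sub>0 \<le> t" "t \<le> t'" "t' \<le> s" for t t'
  proof -
    have "{t..t'} \<subseteq> S" by (rule order.trans[OF _ assms(2)]) (use that in auto)
    with DERIV_ge_imp_diff_ge[OF g', of t t' 0] g''_nonneg that show ?thesis by auto
  qed
  have "0 \<le> g' q"
  proof (rule ccontr)
    assume "\<not> 0 \<le> g' q"
    have "g q - g s\<^sub>0 \<le> g' q * (q - s\<^sub>0)"
      using order assms(2) by (intro DERIV_le_imp_diff_le[OF g]) (auto intro: g'_mono)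
    also have "\<dots> < 0" using \<open>\<not> 0 \<le> g' q\<close> order by (simp add: mult_neg_pos)
    finally show False using min[rule_format, of q] order by auto
  qed
  moreover have "m * (r - q) \<le> g' r - g' q"
    using order assms(2) g''_ge by (intro DERIV_ge_imp_diff_ge[OF g']) (auto simp: q_def)
  ultimately have "m * (r - q) \<le> g' r" by linarith
  have "m * (s - s\<^sub>0)\<^sup>2 / 16 = m * (r - q) * (s - r)"
    by (simp add: q_def r_def power2_eq_square field_simps)
  also have "\<dots> \<le> g' r * (s - r)"
    using \<open>m * (r - q) \<le> g' r\<close> order by (intro mult_right_mono) auto
  also have "\<dots> \<le> g s - g r"
    using order assms(2) by (intro DERIV_ge_imp_diff_ge[OF g]) (auto intro: g'_mono)
  also have "\<dots> \<le> g s - g s\<^sub>0" using min[rule_format, of r] order by auto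
  finally show ?thesis by simp
qed

lemma DERIV_mirror_within:
  assumes "(f has_real_derivative f') (at (- x) within uminus ` S)"
  shows "((\<lambda>x. f (- x)) has_real_derivative - f') (at x within S)"
  using DERIV_image_chain[OF assms DERIV_minus[OF DERIV_ident]] by (simp add: o_def)

lemma convex_min_growth:
  fixes g g' g'' :: "real \<Rightarrow> real"
  assumes g: "\<forall>t\<in>{a..b}. (g has_real_derivative g' t) (at t within {a..b})"
    and g': "\<forall>t\<in>{a..b}. (g' has_real_derivative g'' t) (at t within {a..b})"
    and g''_nonneg: "\<forall>t\<in>{a..b}. 0 \<le> g'' t"
    and "s\<^sub>0 \<in> {a..b}" and min: "\<forall>t\<in>{a..b}. g s\<^sub>0 \<le> g t"
    and "s \<in> {a..b}" and g''_ge: "\<forall>t\<in>closed_segment s ((s\<^sub>0 + s) / 2). m \<le> g'' t"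
  shows "g s\<^sub>0 + m * (s - s\<^sub>0)\<^sup>2 / 16 \<le> g s"
proof (cases s\<^sub>0 s rule: linorder_cases)
  case less
  with \<open>s\<^sub>0 \<in> {a..b}\<close> \<open>s \<in> {a..b}\<close> have "{s\<^sub>0..s} \<subseteq> {a..b}" by auto
  from convex_min_growth_right[OF less this g g'] g''_ge less show ?thesis
    using g''_nonneg min \<open>{s\<^sub>0..s} \<subseteq> {a..b}\<close> by (auto simp: closed_segment_eq_real_ivl)
next
  case greater
  with \<open>s\<^sub>0 \<in> {a..b}\<close> \<open>s \<in> {a..b}\<close> have "{- s\<^sub>0..- s} \<subseteq> {- b..- a}" by auto
  moreover have "\<forall>t\<in>{- b..- a}. ((\<lambda>t. g (- t)) has_real_derivative - g' (- t)) (at t within {- b..- a})"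
    using g by (auto intro!: DERIV_mirror_within)
  moreover have "\<forall>t\<in>{- b..- a}. ((\<lambda>t. - g' (- t)) has_real_derivative g'' (- t)) (at t within {- b..- a})"
    using g' DERIV_minus[OF DERIV_mirror_within] by fastforce
  ultimately have "g (- (- s\<^sub>0)) + m * (- s - - s\<^sub>0)\<^sup>2 / 16 \<le> g (- (- s))"
    using convex_min_growth_right[of "- s\<^sub>0" "- s" "{- b..- a}" "\<lambda>t. g (- t)" "\<lambda>t. - g' (- t)"
        "\<lambda>t. g'' (- t)" m] greater g''_nonneg min g''_ge
    by (force simp: closed_segment_eq_real_ivl)
  then show ?thesis by (simp add: power2_commute)
qed simp

lemma C2_on_with_square_derivatives:
  assumes C2: "C2_on_with \<theta>1 \<theta>2 f f1 f2" and sub: "{a..b} \<subseteq> {\<theta>1..\<theta>2}"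
  shows "\<forall>t\<in>{a..b}. ((\<lambda>t. (f t)\<^sup>2) has_real_derivative 2 * f t * f1 t) (at t within {a..b})"
    and "\<forall>t\<in>{a..b}. ((\<lambda>t. 2 * f t * f1 t) has_real_derivative 2 * ((f1 t)\<^sup>2 + f t * f2 t))
           (at t within {a..b})"
proof -
  have f: "(f has_real_derivative f1 t) (at t within {a..b})"
    and f1: "(f1 has_real_derivative f2 t) (at t within {a..b})" if "t \<in> {a..b}" for t
    using C2 sub that unfolding C2_on_with_def by (meson DERIV_subset subsetD)+
  show "\<forall>t\<in>{a..b}. ((\<lambda>t. (f t)\<^sup>2) has_real_derivative 2 * f t * f1 t) (at t within {a..b})"
    by (auto intro!: derivative_eq_intros f)
  show "\<forall>t\<in>{a..b}. ((\<lambda>t. 2 * f t * f1 t) has_real_derivative 2 * ((f1 t)\<^sup>2 + f t * f2 t))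
      (at t within {a..b})"
    by (auto intro!: derivative_eq_intros f f1 simp: power2_eq_square algebra_simps)
qed

lemma closed_segment_to_midpoint_dist_ge:
  fixes s s\<^sub>0 t :: real
  assumes "s \<in> {\<theta>1..\<theta>2}" and "s\<^sub>0 \<in> {\<theta>1..\<theta>2}" and "t \<in> closed_segment s ((s\<^sub>0 + s) / 2)"
  shows "(s - \<theta>1) / 2 \<le> t - \<theta>1" and "(\<theta>2 - s) / 2 \<le> \<theta>2 - t"
  using assms by (auto simp: closed_segment_eq_real_ivl split: if_splits)

lemma convex_min_growth_endpoint_weight:
  fixes g g' g'' w :: "real \<Rightarrow> real" and \<theta>1 \<theta>2 A \<alpha> :: real
  assumes g: "\<forall>t\<in>{a..b}. (g has_real_derivative g' t) (at t within {a..b})"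
    and g': "\<forall>t\<in>{a..b}. (g' has_real_derivative g'' t) (at t within {a..b})"
    and sub: "{a..b} \<subseteq> {\<theta>1..\<theta>2}" and w: "w = (\<lambda>t. t - \<theta>1) \<or> w = (\<lambda>t. \<theta>2 - t)"
    and "0 \<le> A" "0 \<le> \<alpha>" and g''_ge: "\<forall>t\<in>{a..b}. 2 * (A * w t powr \<alpha>) \<le> g'' t"
    and "s\<^sub>0 \<in> {a..b}" and min: "\<forall>t\<in>{a..b}. g s\<^sub>0 \<le> g t" and "0 \<le> g s\<^sub>0"
    and "s \<in> {a..b}"
  shows "A / (8 * 2 powr \<alpha>) * (s - s\<^sub>0)\<^sup>2 * w s powr \<alpha> \<le> g s"
proof -
  define m where "m = 2 * (A * (w s / 2) powr \<alpha>)"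
  have "0 \<le> w s" using w \<open>s \<in> {a..b}\<close> sub by auto
  have "\<forall>t\<in>{a..b}. 0 \<le> g'' t"
    using g''_ge \<open>0 \<le> A\<close> by (smt (verit) powr_ge_zero mult_nonneg_nonneg)
  moreover have "\<forall>t\<in>closed_segment s ((s\<^sub>0 + s) / 2). m \<le> g'' t"
  proof
    fix t assume t: "t \<in> closed_segment s ((s\<^sub>0 + s) / 2)"
    then have "t \<in> {a..b}"
      using \<open>s \<in> {a..b}\<close> \<open>s\<^sub>0 \<in> {a..b}\<close> by (auto simp: closed_segment_eq_real_ivl split: if_splits)
    have "w s / 2 \<le> w t"
      using closed_segment_to_midpoint_dist_ge[OF _ _ t] w \<open>s \<in> {a..b}\<close> \<open>s\<^sub>0 \<in> {a..b}\<close> sub by auto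
    then have "m \<le> 2 * (A * w t powr \<alpha>)"
      unfolding m_def using \<open>0 \<le> w s\<close> \<open>0 \<le> A\<close> \<open>0 \<le> \<alpha>\<close> by (intro mult_left_mono powr_mono2) auto
    also have "\<dots> \<le> g'' t" using g''_ge \<open>t \<in> {a..b}\<close> by blast
    finally show "m \<le> g'' t" .
  qed
  ultimately have "m * (s - s\<^sub>0)\<^sup>2 / 16 \<le> g s"
    using convex_min_growth[OF g g' _ \<open>s\<^sub>0 \<in> {a..b}\<close> min \<open>s \<in> {a..b}\<close>] \<open>0 \<le> g s\<^sub>0\<close> by fastforce
  moreover have "m = 2 * A * w s powr \<alpha> / 2 powr \<alpha>"
    using \<open>0 \<le> w s\<close> by (simp add: m_def powr_divide)
  ultimately show ?thesis by (simp add: field_simps)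
qed

lemma C2_square_growth:
  fixes \<theta>1 \<theta>2 A \<alpha> :: real
  assumes C2: "C2_on_with \<theta>1 \<theta>2 f f1 f2" and "\<theta>1 \<le> a" "a \<le> b" "b \<le> \<theta>2"
    and "0 \<le> A" "0 \<le> \<alpha>"
    and "(\<forall>s\<in>{a..b}. A * (s - \<theta>1) powr \<alpha> \<le> f s * f2 s) \<or>
         (\<forall>s\<in>{a..b}. A * (\<theta>2 - s) powr \<alpha> \<le> f s * f2 s)"
  shows "\<exists>s\<^sub>0\<in>{a..b}. \<forall>s\<in>{a..b}. \<exists>e\<in>{s - \<theta>1, \<theta>2 - s}.
           A / (8 * 2 powr \<alpha>) * (s - s\<^sub>0)\<^sup>2 * e powr \<alpha> \<le> (f s)\<^sup>2"
proof -
  obtain w where w: "w = (\<lambda>t. t - \<theta>1) \<or> w = (\<lambda>t. \<theta>2 - t)"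
    and fw: "\<forall>t\<in>{a..b}. A * w t powr \<alpha> \<le> f t * f2 t"
    using assms(7) by blast
  have sub: "{a..b} \<subseteq> {\<theta>1..\<theta>2}" using assms(2,4) by auto
  note derivs = C2_on_with_square_derivatives[OF C2 sub]
  have g''_ge: "\<forall>t\<in>{a..b}. 2 * (A * w t powr \<alpha>) \<le> 2 * ((f1 t)\<^sup>2 + f t * f2 t)"
    using fw by (auto intro!: mult_left_mono add_increasing)
  have "continuous_on {a..b} (\<lambda>t. (f t)\<^sup>2)"
    using derivs(1) by (intro DERIV_continuous_on) auto
  then obtain s\<^sub>0 where "s\<^sub>0 \<in> {a..b}" and min: "\<forall>t\<in>{a..b}. (f s\<^sub>0)\<^sup>2 \<le> (f t)\<^sup>2"
    using continuous_attains_inf[of "{a..b}" "\<lambda>t. (f t)\<^sup>2"] \<open>a \<le> b\<close> by auto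
  have "A / (8 * 2 powr \<alpha>) * (s - s\<^sub>0)\<^sup>2 * w s powr \<alpha> \<le> (f s)\<^sup>2" if "s \<in> {a..b}" for s
    using convex_min_growth_endpoint_weight[OF derivs sub w assms(5,6) g''_ge \<open>s\<^sub>0 \<in> {a..b}\<close> min
        zero_le_power2 that] .
  moreover have "w s \<in> {s - \<theta>1, \<theta>2 - s}" for s using w by auto
  ultimately show ?thesis using \<open>s\<^sub>0 \<in> {a..b}\<close> by blast
qed

lemma powr_neg_mult_powr_neg_le:
  fixes x y p q :: real
  assumes "0 < x" "0 < y" "0 \<le> p" "0 \<le> q"
  shows "x powr - p * y powr - q \<le> x powr - (p + q) + y powr - (p + q)"
proof -
  have "x powr - p * y powr - q \<le> min x y powr - p * min x y powr - q"
    using assms by (intro mult_mono powr_mono2') auto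
  also have "\<dots> = min x y powr - (p + q)" by (simp add: powr_add[symmetric])
  also have "\<dots> \<le> x powr - (p + q) + y powr - (p + q)" by (simp add: min_def)
  finally show ?thesis .
qed

lemma power2_powr: "((x :: real)\<^sup>2) powr c = \<bar>x\<bar> powr (2 * c)"
proof -
  have "x\<^sup>2 = \<bar>x\<bar> powr 2" by simp
  then show ?thesis by (simp only: powr_powr)
qed

lemma neg_pow_integrand_le:
  fixes \<gamma> K \<alpha> e :: real
  assumes "0 < \<gamma>" "0 < K" "0 \<le> \<alpha>" "0 < e" "s \<noteq> s\<^sub>0"
    and growth: "K * (s - s\<^sub>0)\<^sup>2 * e powr \<alpha> \<le> (f s)\<^sup>2"
  shows "neg_pow_integrand \<gamma> f s \<le> ennreal (K powr (- 1 / (2 * \<gamma>)) *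
           (\<bar>s - s\<^sub>0\<bar> powr - ((2 + \<alpha>) / (2 * \<gamma>)) + e powr - ((2 + \<alpha>) / (2 * \<gamma>))))"
proof -
  define c where "c = - 1 / (2 * \<gamma>)"
  have "0 < K * (s - s\<^sub>0)\<^sup>2 * e powr \<alpha>" using assms by simp
  with growth have "f s \<noteq> 0" by auto
  have "\<bar>f s\<bar> powr (- 1 / \<gamma>) = ((f s)\<^sup>2) powr c"
    using \<open>0 < \<gamma>\<close> by (simp add: c_def power2_powr)
  also have "\<dots> \<le> (K * (s - s\<^sub>0)\<^sup>2 * e powr \<alpha>) powr c"
    using growth \<open>0 < K * (s - s\<^sub>0)\<^sup>2 * e powr \<alpha>\<close> \<open>0 < \<gamma>\<close> by (intro powr_mono2') (auto simp: c_def)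
  also have "\<dots> = K powr c * (\<bar>s - s\<^sub>0\<bar> powr - (1 / \<gamma>) * e powr - (\<alpha> / (2 * \<gamma>)))"
    using assms by (simp add: c_def powr_mult powr_powr power2_powr)
  also have "\<dots> \<le> K powr c * (\<bar>s - s\<^sub>0\<bar> powr - (1 / \<gamma> + \<alpha> / (2 * \<gamma>))
      + e powr - (1 / \<gamma> + \<alpha> / (2 * \<gamma>)))"
    using assms by (intro mult_left_mono powr_neg_mult_powr_neg_le) auto
  also have "1 / \<gamma> + \<alpha> / (2 * \<gamma>) = (2 + \<alpha>) / (2 * \<gamma>)"
    using \<open>0 < \<gamma>\<close> by (simp add: field_simps)
  finally show ?thesis
    using \<open>f s \<noteq> 0\<close> by (simp add: neg_pow_integrand_def c_def ennreal_leI)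
qed

lemma nn_integral_abs_powr_neg_le:
  fixes c L r :: real
  assumes "r < 1" "0 \<le> L"
  shows "(\<integral>\<^sup>+ s\<in>{c - L..c + L}. ennreal (\<bar>s - c\<bar> powr - r) \<partial>lborel)
           \<le> ennreal (2 * (L powr (1 - r) / (1 - r)))"
proof -
  define G where "G x = ennreal (x powr - r) * indicator {0..L} x" for x :: real
  have [measurable]: "G \<in> borel_measurable borel" unfolding G_def by measurable
  have "((\<lambda>x. x powr - r) has_integral L powr (- r + 1) / (- r + 1)) {0..L}"
    using assms by (intro has_integral_powr_from_0) auto
  then have G: "(\<integral>\<^sup>+ x. G x \<partial>lborel) = ennreal (L powr (1 - r) / (1 - r))"
    unfolding G_def by (subst nn_integral_has_integral_lebesgue') auto
  have shifted: "(\<integral>\<^sup>+ s. G (s - c) \<partial>lborel) = ennreal (L powr (1 - r) / (1 - r))"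
    "(\<integral>\<^sup>+ s. G (c - s) \<partial>lborel) = ennreal (L powr (1 - r) / (1 - r))"
    using nn_integral_real_affine[of G 1 "- c"] nn_integral_real_affine[of G "- 1" c] G by simp_all
  have "(\<integral>\<^sup>+ s\<in>{c - L..c + L}. ennreal (\<bar>s - c\<bar> powr - r) \<partial>lborel)
      \<le> (\<integral>\<^sup>+ s. G (s - c) + G (c - s) \<partial>lborel)"
    by (intro nn_integral_mono) (auto simp: G_def indicator_def abs_if)
  also have "\<dots> = ennreal (L powr (1 - r) / (1 - r)) + ennreal (L powr (1 - r) / (1 - r))"
    by (subst nn_integral_add) (auto simp: shifted)
  also have "\<dots> = ennreal (2 * (L powr (1 - r) / (1 - r)))"
    using assms by (simp flip: ennreal_plus)
  finally show ?thesis .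
qed

lemma nn_integral_neg_pow_integrand_le:
  fixes \<theta>1 \<theta>2 \<gamma> \<alpha> K :: real
  defines "r \<equiv> (2 + \<alpha>) / (2 * \<gamma>)"
  assumes "0 < \<gamma>" "0 \<le> \<alpha>" "r < 1" "0 < K" "\<theta>1 \<le> a" "b \<le> \<theta>2" "s\<^sub>0 \<in> {\<theta>1..\<theta>2}"
    and growth: "\<forall>s\<in>{a..b}. \<exists>e\<in>{s - \<theta>1, \<theta>2 - s}. K * (s - s\<^sub>0)\<^sup>2 * e powr \<alpha> \<le> (f s)\<^sup>2"
  shows "(\<integral>\<^sup>+ s\<in>{a..b}. neg_pow_integrand \<gamma> f s \<partial>lborel)
           \<le> ennreal (6 * K powr (- 1 / (2 * \<gamma>)) * ((\<theta>2 - \<theta>1) powr (1 - r) / (1 - r)))"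
proof -
  define L where "L = \<theta>2 - \<theta>1"
  define Kp where "Kp = K powr (- 1 / (2 * \<gamma>))"
  define h where "h c s = ennreal (\<bar>s - c\<bar> powr - r) * indicator {c - L..c + L} s" for c s
  have [measurable]: "h c \<in> borel_measurable lborel" for c unfolding h_def by measurable
  have "0 \<le> L" using assms(6-8) by (simp add: L_def)
  define B where "B = ennreal (2 * (L powr (1 - r) / (1 - r)))"
  have h_int: "(\<integral>\<^sup>+ s. h c s \<partial>lborel) \<le> B" for c
    using nn_integral_abs_powr_neg_le[OF \<open>r < 1\<close> \<open>0 \<le> L\<close>] by (simp add: h_def B_def)
  have pointwise: "neg_pow_integrand \<gamma> f s * indicator {a..b} s \<le> Kp * (h s\<^sub>0 s + h \<theta>1 s + h \<theta>2 s)"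
    if "s \<noteq> s\<^sub>0" "s \<noteq> \<theta>1" "s \<noteq> \<theta>2" for s
  proof (cases "s \<in> {a..b}")
    case True
    then obtain e where e: "e \<in> {s - \<theta>1, \<theta>2 - s}" and "K * (s - s\<^sub>0)\<^sup>2 * e powr \<alpha> \<le> (f s)\<^sup>2"
      using growth by blast
    moreover have "0 < e" using e True that assms(6,7) by auto
    ultimately have "neg_pow_integrand \<gamma> f s \<le> ennreal (Kp * (\<bar>s - s\<^sub>0\<bar> powr - r + e powr - r))"
      using neg_pow_integrand_le assms(2,3,5) that(1) by (simp add: Kp_def r_def)
    also have "\<dots> \<le> ennreal (Kp * (\<bar>s - s\<^sub>0\<bar> powr - r + \<bar>s - \<theta>1\<bar> powr - r + \<bar>s - \<theta>2\<bar> powr - r))"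
      using e True assms(5-7) by (intro ennreal_leI mult_left_mono) (auto simp: Kp_def)
    also have "\<dots> = Kp * (h s\<^sub>0 s + h \<theta>1 s + h \<theta>2 s)"
      using True assms(6-8) by (simp add: h_def L_def Kp_def ennreal_mult ennreal_plus abs_if)
    finally show ?thesis using True by simp
  qed simp
  have "AE s in lborel.
      neg_pow_integrand \<gamma> f s * indicator {a..b} s \<le> Kp * (h s\<^sub>0 s + h \<theta>1 s + h \<theta>2 s)"
    using AE_lborel_singleton[of s\<^sub>0] AE_lborel_singleton[of \<theta>1] AE_lborel_singleton[of \<theta>2]
    by eventually_elim (rule pointwise)
  then have "(\<integral>\<^sup>+ s\<in>{a..b}. neg_pow_integrand \<gamma> f s \<partial>lborel)
      \<le> (\<integral>\<^sup>+ s. Kp * (h s\<^sub>0 s + h \<theta>1 s + h \<theta>2 s) \<partial>lborel)"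
    by (rule nn_integral_mono_AE)
  also have "\<dots> = Kp * ((\<integral>\<^sup>+ s. h s\<^sub>0 s \<partial>lborel) + (\<integral>\<^sup>+ s. h \<theta>1 s \<partial>lborel)
      + (\<integral>\<^sup>+ s. h \<theta>2 s \<partial>lborel))"
    by (simp add: nn_integral_cmult nn_integral_add)
  also have "\<dots> \<le> Kp * (B + B + B)"
    using h_int by (intro mult_left_mono add_mono) (auto simp: B_def)
  also have "\<dots> = ennreal (6 * Kp * (L powr (1 - r) / (1 - r)))"
    using \<open>r < 1\<close> by (simp add: B_def Kp_def flip: ennreal_plus ennreal_mult)
  finally show ?thesis by (simp add: Kp_def L_def)
qed

theorem lemma3p6:
  fixes \<theta>1 \<theta>2 \<gamma> A \<alpha> :: real
  assumes "\<theta>1 < \<theta>2" and "\<gamma> > 1" and "A > 0" and "\<alpha> > 0" and "\<alpha> < 2 * \<gamma> - 2"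
  shows "\<exists>C>0. \<forall>(f :: real \<Rightarrow> real) f1 f2 (a :: real) b.
            C2_on_with \<theta>1 \<theta>2 f f1 f2 \<longrightarrow> \<theta>1 \<le> a \<longrightarrow> b \<le> \<theta>2 \<longrightarrow>
            ((\<forall>s\<in>{a..b}. f s * f2 s \<ge> A * (s - \<theta>1) powr \<alpha>) \<or>
             (\<forall>s\<in>{a..b}. f s * f2 s \<ge> A * (\<theta>2 - s) powr \<alpha>)) \<longrightarrow>
            (\<integral>\<^sup>+ s \<in> {a..b}. neg_pow_integrand \<gamma> f s \<partial>lborel) \<le> ennreal C"
proof -
  define r where "r = (2 + \<alpha>) / (2 * \<gamma>)"
  define K where "K = A / (8 * 2 powr \<alpha>)"
  define C where "C = 6 * K powr (- 1 / (2 * \<gamma>)) * ((\<theta>2 - \<theta>1) powr (1 - r) / (1 - r))"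
  have "r < 1" using assms by (simp add: r_def field_simps)
  have "0 < K" using \<open>A > 0\<close> by (simp add: K_def)
  have "0 < C" using \<open>r < 1\<close> \<open>0 < K\<close> \<open>\<theta>1 < \<theta>2\<close> by (simp add: C_def)
  show ?thesis
  proof (intro exI[of _ C] conjI allI impI \<open>0 < C\<close>)
    fix f f1 f2 :: "real \<Rightarrow> real" and a b :: real
    assume C2: "C2_on_with \<theta>1 \<theta>2 f f1 f2" and "\<theta>1 \<le> a" "b \<le> \<theta>2"
      and lower_bound: "(\<forall>s\<in>{a..b}. f s * f2 s \<ge> A * (s - \<theta>1) powr \<alpha>) \<or>
        (\<forall>s\<in>{a..b}. f s * f2 s \<ge> A * (\<theta>2 - s) powr \<alpha>)"
    show "(\<integral>\<^sup>+ s \<in> {a..b}. neg_pow_integrand \<gamma> f s \<partial>lborel) \<le> ennreal C"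
    proof (cases "a \<le> b")
      case True
      obtain s\<^sub>0 where "s\<^sub>0 \<in> {a..b}" and growth:
        "\<forall>s\<in>{a..b}. \<exists>e\<in>{s - \<theta>1, \<theta>2 - s}. K * (s - s\<^sub>0)\<^sup>2 * e powr \<alpha> \<le> (f s)\<^sup>2"
        using C2_square_growth[OF C2 \<open>\<theta>1 \<le> a\<close> True \<open>b \<le> \<theta>2\<close> _ _ lower_bound, folded K_def]
          assms(3,4) by auto
      then show ?thesis
        using nn_integral_neg_pow_integrand_le[of \<gamma> \<alpha> K \<theta>1 a b \<theta>2 s\<^sub>0 f] assms \<open>r < 1\<close> \<open>0 < K\<close>
          \<open>\<theta>1 \<le> a\<close> \<open>b \<le> \<theta>2\<close>
        by (auto simp: C_def r_def)
    qed simp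
  qed
qed

end
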